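(* There is no $e\in\mathsf{KAT}(\{x_1,x_2\},\emptyset)$ such that $O_e(L_1,L_2)=L_1\cap L_2$ for all finite $\Sigma,T$ and all $L_1,L_2\in\mathcal{G}(\Sigma,T)$.
   Context: For finite $T$, $\Sigma$: $\mathsf{BA}(T)$ Boolean expressions over $T$; $\mathsf{KAT}(\Sigma,T)$: $e::=b\in\mathsf{BA}(T)\mid p\in\Sigma\mid e+f\mid e\cdot f\mid e^*$. Atoms $\mathsf{At}_T=2^T$, $\alpha\le b$ meaning $b$ holds under the assignment making exactly the tests in $\alpha$ true. Guarded strings: words in $\mathsf{At}_T(\Sigma\mathsf{At}_T)^*$. $w'\alpha\diamond\alpha x'=w'\alpha x'$; $L\diamond K=\{w\diamond x:w\in L,x\in K,\text{defined}\}$; $L^{(0)}=\mathsf{At}_T$, $L^{(n+1)}=L\diamond L^{(n)}$, $L^{( * )}=\bigcup_nL^{(n)}$. $L(b)=\{\alpha:\alpha\le b\}$, $L(p)=\{\alpha p\beta\}$, $L(e+f)=L(e)\cup L(f)$, $L(ef)=L(e)\diamond L(f)$, $L(e^* )=L(e)^{( * )}$. $\mathcal{G}(\Sigma,T)$: guarded languages regular over alphabet $\mathsf{At}_T\cup\Sigma$. Substitution: for $\mathfrak{s}:\Sigma_0\to\mathcal{G}(\Sigma_1,T_1)$, $\mathfrak{t}:T_0\to\mathsf{BA}(T_1)$: $\beta\in\mathsf{At}_{T_1}$ is $\mathfrak{t}$-consistent with $\alpha\in\mathsf{At}_{T_0}$ if $\alpha\le t\iff\beta\le\mathfrak{t}(t)$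 for all $t\in T_0$; $\mathrm{apply}_{\mathfrak{t}}(L)=\{\beta_0p_0\cdots p_{n-1}\beta_n:\exists\alpha_0p_0\cdots p_{n-1}\alpha_n\in L,\ \beta_i\ \mathfrak{t}\text{-consistent with }\alpha_i\}$; $\mathrm{apply}^{\mathfrak{s}}(L)=\{\alpha_0\diamond w_0\diamond\alpha_1\diamond\cdots\diamond w_{n-1}\diamond\alpha_n:\alpha_0p_0\cdots p_{n-1}\alpha_n\in L,\ w_i\in\mathfrak{s}(p_i)\}$; $\mathrm{apply}^{\mathfrak{s}}_{\mathfrak{t}}=\mathrm{apply}^{\mathfrak{s}}\circ\mathrm{apply}_{\mathfrak{t}}$. For $e\in\mathsf{KAT}(\{x_1,\dots,x_n\},\{y_1,\dots,y_m\})$, the regular operation $O_e$ takes (for any finite $\Sigma,T$) $L_1,\dots,L_n\in\mathcal{G}(\Sigma,T)$ and $b_1,\dots,b_m\in\mathsf{BA}(T)$ and returns $\mathrm{apply}^{\mathfrak{s}}_{\mathfrak{t}}(L(e))$ where $\mathfrak{s}(x_i)=L_i$, $\mathfrak{t}(y_i)=b_i$. Here $m=0$, so $O_e(L_1,L_2)=\mathrm{apply}^{\mathfrak{s}}_{\mathfrak{t}}(L(e))$ with $\mathfrak{t}$ the empty map. *)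

theory Defs
  imports Main
begin

(* Primitive actions and primitive tests are both encoded as natural numbers;
   the finite sets Sigma, T are finite sets of naturals. *)

datatype bexp = BVar nat | BZero | BOne | BNot bexp | BAnd bexp bexp | BOr bexp bexp

(* alpha \<le> b : b holds under the assignment making exactly the tests in alpha true *)
fun beval :: "nat set \<Rightarrow> bexp \<Rightarrow> bool" where
  "beval \<alpha> (BVar t) = (t \<in> \<alpha>)"
| "beval \<alpha> BZero = False"
| "beval \<alpha> BOne = True"
| "beval \<alpha> (BNot b) = (\<not> beval \<alpha> b)"
| "beval \<alpha> (BAnd b c) = (beval \<alpha> b \<and> beval \<alpha> c)"
| "beval \<alpha> (BOr b c) = (beval \<alpha> b \<or> beval \<alpha> c)"

fun bvars :: "bexp \<Rightarrow> nat set" where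
  "bvars (BVar t) = {t}"
| "bvars BZero = {}"
| "bvars BOne = {}"
| "bvars (BNot b) = bvars b"
| "bvars (BAnd b c) = bvars b \<union> bvars c"
| "bvars (BOr b c) = bvars b \<union> bvars c"

datatype kat = KTest bexp | KPrim nat | KPlus kat kat | KSeq kat kat | KStar kat

fun wf_kat :: "nat set \<Rightarrow> nat set \<Rightarrow> kat \<Rightarrow> bool" where
  "wf_kat S T (KTest b) = (bvars b \<subseteq> T)"
| "wf_kat S T (KPrim p) = (p \<in> S)"
| "wf_kat S T (KPlus e f) = (wf_kat S T e \<and> wf_kat S T f)"
| "wf_kat S T (KSeq e f) = (wf_kat S T e \<and> wf_kat S T f)"
| "wf_kat S T (KStar e) = wf_kat S T e"

datatype sym = At "nat set" | Act nat

fun gs_tail :: "nat set \<Rightarrow> nat set \<Rightarrow> sym list \<Rightarrow> bool" where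
  "gs_tail S T [] = True"
| "gs_tail S T (Act p # At \<alpha> # w) = (p \<in> S \<and> \<alpha> \<subseteq> T \<and> gs_tail S T w)"
| "gs_tail S T _ = False"

fun is_gs :: "nat set \<Rightarrow> nat set \<Rightarrow> sym list \<Rightarrow> bool" where
  "is_gs S T (At \<alpha> # w) = (\<alpha> \<subseteq> T \<and> gs_tail S T w)"
| "is_gs S T _ = False"

definition atoms :: "nat set \<Rightarrow> sym list set" where
  "atoms T = {[At \<alpha>] | \<alpha>. \<alpha> \<subseteq> T}"

definition fuse :: "sym list set \<Rightarrow> sym list set \<Rightarrow> sym list set" where
  "fuse L K = {w @ tl x | w x. w \<in> L \<and> x \<in> K \<and> w \<noteq> [] \<and> x \<noteq> [] \<and>
                 (\<exists>\<alpha>. last w = At \<alpha> \<and> hd x = At \<alpha>)}"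

fun fpow :: "nat set \<Rightarrow> sym list set \<Rightarrow> nat \<Rightarrow> sym list set" where
  "fpow T L 0 = atoms T"
| "fpow T L (Suc n) = fuse L (fpow T L n)"

definition fstar :: "nat set \<Rightarrow> sym list set \<Rightarrow> sym list set" where
  "fstar T L = (\<Union>n. fpow T L n)"

fun klang :: "nat set \<Rightarrow> kat \<Rightarrow> sym list set" where
  "klang T (KTest b) = {[At \<alpha>] | \<alpha>. \<alpha> \<subseteq> T \<and> beval \<alpha> b}"
| "klang T (KPrim p) = {[At \<alpha>, Act p, At \<beta>] | \<alpha> \<beta>. \<alpha> \<subseteq> T \<and> \<beta> \<subseteq> T}"
| "klang T (KPlus e f) = klang T e \<union> klang T f"
| "klang T (KSeq e f) = fuse (klang T e) (klang T f)"
| "klang T (KStar e) = fstar T (klang T e)"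

datatype 'a rexp = RZero | ROne | RAtom 'a | RPlus "'a rexp" "'a rexp"
  | RTimes "'a rexp" "'a rexp" | RStar "'a rexp"

definition conc :: "'a list set \<Rightarrow> 'a list set \<Rightarrow> 'a list set" where
  "conc A B = {u @ v | u v. u \<in> A \<and> v \<in> B}"

fun cpow :: "'a list set \<Rightarrow> nat \<Rightarrow> 'a list set" where
  "cpow A 0 = {[]}"
| "cpow A (Suc n) = conc A (cpow A n)"

fun rlang :: "'a rexp \<Rightarrow> 'a list set" where
  "rlang RZero = {}"
| "rlang ROne = {[]}"
| "rlang (RAtom a) = {[a]}"
| "rlang (RPlus r s) = rlang r \<union> rlang s"
| "rlang (RTimes r s) = conc (rlang r) (rlang s)"
| "rlang (RStar r) = (\<Union>n. cpow (rlang r) n)"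

definition guarded_langs :: "nat set \<Rightarrow> nat set \<Rightarrow> sym list set set" where
  "guarded_langs S T = {L. (\<forall>w\<in>L. is_gs S T w) \<and>
      (\<exists>r. rlang r = L \<and>
         (\<forall>a \<in> rexp.set_rexp r. (\<exists>\<alpha>. a = At \<alpha> \<and> \<alpha> \<subseteq> T) \<or> (\<exists>p. a = Act p \<and> p \<in> S)))}"

definition t_consistent :: "nat set \<Rightarrow> (nat \<Rightarrow> bexp) \<Rightarrow> nat set \<Rightarrow> nat set \<Rightarrow> bool" where
  "t_consistent T0 tm \<alpha> \<beta> = (\<forall>t\<in>T0. (t \<in> \<alpha>) = beval \<beta> (tm t))"

fun sym_rel :: "nat set \<Rightarrow> nat set \<Rightarrow> (nat \<Rightarrow> bexp) \<Rightarrow> sym \<Rightarrow> sym \<Rightarrow> bool" where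
  "sym_rel T0 T1 tm (At \<alpha>) (At \<beta>) = (\<beta> \<subseteq> T1 \<and> t_consistent T0 tm \<alpha> \<beta>)"
| "sym_rel T0 T1 tm (Act p) (Act q) = (p = q)"
| "sym_rel T0 T1 tm _ _ = False"

definition apply_t :: "nat set \<Rightarrow> nat set \<Rightarrow> (nat \<Rightarrow> bexp) \<Rightarrow> sym list set \<Rightarrow> sym list set" where
  "apply_t T0 T1 tm L = {v. \<exists>w\<in>L. list_all2 (sym_rel T0 T1 tm) w v}"

fun subst_word :: "(nat \<Rightarrow> sym list set) \<Rightarrow> sym list \<Rightarrow> sym list set" where
  "subst_word s [At \<alpha>] = {[At \<alpha>]}"
| "subst_word s (At \<alpha> # Act p # w) = fuse (fuse {[At \<alpha>]} (s p)) (subst_word s w)"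
| "subst_word s _ = {}"

definition apply_s :: "(nat \<Rightarrow> sym list set) \<Rightarrow> sym list set \<Rightarrow> sym list set" where
  "apply_s s L = (\<Union>w\<in>L. subst_word s w)"

(* O_e for e \<in> KAT({x_1..x_n},{y_1..y_m}) with x_i, y_i encoded as the numbers i:
   O_e(L_1..L_n, b_1..b_m) = apply^s_t(L(e)) where s(x_i) = L_i, t(y_i) = b_i;
   the target test set is T1. *)
definition kat_op :: "nat \<Rightarrow> kat \<Rightarrow> (nat \<Rightarrow> sym list set) \<Rightarrow> (nat \<Rightarrow> bexp) \<Rightarrow> nat set \<Rightarrow> sym list set" where
  "kat_op m e Ls bs T1 = apply_s Ls (apply_t {1..m} T1 bs (klang {1..m} e))"

end

theory Submission
  imports Defs
begin

text \<open>Without tests there is a single atom \<open>1\<close>, and the test substitution is the identity.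
  Substituting the one-action word \<open>1a1\<close> for every action only renames actions, so
  \<open>O\<^sub>e({1a1}, {1a1}) = {1a1}\<close> forces \<open>L(e)\<close> to contain a word \<open>1 x\<^sub>i 1\<close>. Whichever
  \<open>i\<close> it is, it contributes a word to \<open>O\<^sub>e({1a1}, {1})\<close>, although
  \<open>{1a1} \<inter> {1} = {}\<close>.\<close>

lemma gs_tail_append: "gs_tail S T u \<Longrightarrow> gs_tail S T v \<Longrightarrow> gs_tail S T (u @ v)"
  by (induction S T u rule: gs_tail.induct) auto

lemma is_gs_iff: "is_gs S T w \<longleftrightarrow> (\<exists>\<alpha> t. w = At \<alpha> # t \<and> \<alpha> \<subseteq> T \<and> gs_tail S T t)"
  by (cases "(S, T, w)" rule: is_gs.cases) auto

lemma gs_tail_alphabet: "gs_tail S T w \<Longrightarrow> set w \<subseteq> At ` Pow T \<union> Act ` S"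
  by (induction S T w rule: gs_tail.induct) auto

lemma is_gs_alphabet: "is_gs S T w \<Longrightarrow> set w \<subseteq> At ` Pow T \<union> Act ` S"
  by (cases "(S, T, w)" rule: is_gs.cases) (auto dest!: gs_tail_alphabet)

lemma fuse_guarded:
  assumes "L \<subseteq> Collect (is_gs S T)" and "K \<subseteq> Collect (is_gs S T)"
  shows "fuse L K \<subseteq> Collect (is_gs S T)"
proof
  fix w assume "w \<in> fuse L K"
  then obtain u x where w: "w = u @ tl x" and "u \<in> L" "x \<in> K" unfolding fuse_def by blast
  from assms(1) \<open>u \<in> L\<close> obtain \<alpha> t where "u = At \<alpha> # t" "\<alpha> \<subseteq> T" "gs_tail S T t"
    unfolding is_gs_iff by blast
  moreover from assms(2) \<open>x \<in> K\<close> obtain \<beta> t' where "x = At \<beta> # t'" "gs_tail S T t'"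
    unfolding is_gs_iff by blast
  ultimately show "w \<in> Collect (is_gs S T)" using w by (simp add: gs_tail_append)
qed

lemma klang_guarded: "wf_kat S T e \<Longrightarrow> klang T e \<subseteq> Collect (is_gs S T)"
proof (induction e)
  case (KSeq e f)
  then show ?case by (simp add: fuse_guarded)
next
  case (KStar e)
  have "fpow T (klang T e) n \<subseteq> Collect (is_gs S T)" for n
  proof (induction n)
    case 0
    show ?case by (auto simp: atoms_def)
  next
    case (Suc n)
    with KStar show ?case by (simp add: fuse_guarded)
  qed
  then show ?case by (auto simp: fstar_def)
qed auto

fun word_rexp :: "'a list \<Rightarrow> 'a rexp" where
  "word_rexp [] = ROne"
| "word_rexp (a # w) = RTimes (RAtom a) (word_rexp w)"

lemma rlang_word_rexp: "rlang (word_rexp w) = {w}"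
  by (induction w) (auto simp: conc_def)

lemma set_word_rexp: "rexp.set_rexp (word_rexp w) = set w"
  by (induction w) auto

lemma singleton_guarded_lang: "is_gs S T w \<Longrightarrow> {w} \<in> guarded_langs S T"
  unfolding guarded_langs_def
  by (auto intro!: exI[of _ "word_rexp w"] simp: rlang_word_rexp set_word_rexp dest!: is_gs_alphabet)

lemma sym_rel_no_tests:
  "sym_rel {} {} tm x y \<longleftrightarrow> (case x of At \<alpha> \<Rightarrow> y = At {} | Act p \<Rightarrow> y = Act p)"
  by (cases x; cases y) (auto simp: t_consistent_def)

lemma list_all2_sym_rel_no_tests:
  "set w \<subseteq> At ` Pow {} \<union> Act ` S \<Longrightarrow> list_all2 (sym_rel {} {} tm) w v \<longleftrightarrow> v = w"
proof (induction w arbitrary: v)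
  case (Cons x w)
  then show ?case by (cases v) (auto simp: sym_rel_no_tests)
qed auto

lemma apply_t_no_tests:
  assumes "L \<subseteq> Collect (is_gs S {})"
  shows "apply_t {} {} tm L = L"
proof -
  have "list_all2 (sym_rel {} {} tm) w v \<longleftrightarrow> v = w" if "w \<in> L" for w v
    using assms that by (metis list_all2_sym_rel_no_tests is_gs_alphabet mem_Collect_eq subsetD)
  then show ?thesis unfolding apply_t_def by auto
qed

lemma kat_op_no_tests: "wf_kat S {} e \<Longrightarrow> kat_op 0 e Ls bs {} = apply_s Ls (klang {} e)"
  using apply_t_no_tests[OF klang_guarded] by (simp add: kat_op_def)

lemma fuse_atom_left: "fuse {[At \<alpha>]} K = {x \<in> K. x \<noteq> [] \<and> hd x = At \<alpha>}"
  by (auto simp: fuse_def) (metis list.collapse)+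

lemma fuse_atom_right: "fuse L {[At \<beta>]} = {w \<in> L. w \<noteq> [] \<and> last w = At \<beta>}"
  by (auto simp: fuse_def)

lemma subst_word_single_action:
  "subst_word s [At \<alpha>, Act p, At \<beta>] = {w \<in> s p. w \<noteq> [] \<and> hd w = At \<alpha> \<and> last w = At \<beta>}"
  by (auto simp: fuse_atom_left fuse_atom_right)

lemma apply_s_single_actionI:
  "[At \<alpha>, Act p, At \<beta>] \<in> L \<Longrightarrow> w \<in> s p \<Longrightarrow> w \<noteq> [] \<Longrightarrow> hd w = At \<alpha> \<Longrightarrow> last w = At \<beta>
    \<Longrightarrow> w \<in> apply_s s L"
  unfolding apply_s_def using subst_word_single_action[of s \<alpha> p \<beta>] by blast

fun rename_act :: "(nat \<Rightarrow> nat) \<Rightarrow> sym \<Rightarrow> sym" where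
  "rename_act f (At \<alpha>) = At \<alpha>"
| "rename_act f (Act p) = Act (f p)"

lemma rename_act_eq_At_iff [simp]: "rename_act f x = At \<alpha> \<longleftrightarrow> x = At \<alpha>"
  by (cases x) auto

lemma rename_act_eq_Act_iff [simp]: "rename_act f x = Act q \<longleftrightarrow> (\<exists>p. x = Act p \<and> f p = q)"
  by (cases x) auto

lemma subst_word_rename_acts_tail:
  "gs_tail S {} t \<Longrightarrow>
    subst_word (\<lambda>p. {[At {}, Act (f p), At {}]}) (At {} # t) = {At {} # map (rename_act f) t}"
  by (induction S "{} :: nat set" t rule: gs_tail.induct) (auto simp: fuse_atom_left fuse_def)

lemma subst_word_rename_acts:
  "is_gs S {} w \<Longrightarrow> subst_word (\<lambda>p. {[At {}, Act (f p), At {}]}) w = {map (rename_act f) w}"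
  by (auto simp: is_gs_iff subst_word_rename_acts_tail)

lemma apply_s_const_single_action_inv:
  assumes "L \<subseteq> Collect (is_gs S {})"
    and "[At {}, Act a, At {}] \<in> apply_s (\<lambda>_. {[At {}, Act a, At {}]}) L"
  shows "\<exists>p. [At {}, Act p, At {}] \<in> L"
proof -
  from assms(2) obtain w where "w \<in> L"
    and w: "[At {}, Act a, At {}] \<in> subst_word (\<lambda>_. {[At {}, Act a, At {}]}) w"
    unfolding apply_s_def by blast
  with assms(1) have "map (rename_act (\<lambda>_. a)) w = [At {}, Act a, At {}]"
    using subst_word_rename_acts[of S w "\<lambda>_. a"] by auto
  then obtain p where "w = [At {}, Act p, At {}]"
    by (auto simp: map_eq_Cons_conv)
  with \<open>w \<in> L\<close> show ?thesis by blast
qed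

theorem lemma5p7:
  shows "\<not> (\<exists>e. wf_kat {1, 2} {} e \<and>
           (\<forall>(S::nat set) (T::nat set) L1 L2.
              finite S \<longrightarrow> finite T \<longrightarrow>
              L1 \<in> guarded_langs S T \<longrightarrow> L2 \<in> guarded_langs S T \<longrightarrow>
              kat_op 0 e (\<lambda>i. if i = 1 then L1 else L2) (\<lambda>_. BZero) T = L1 \<inter> L2))"
proof
  assume "\<exists>e. wf_kat {1, 2} {} e \<and>
           (\<forall>(S::nat set) (T::nat set) L1 L2.
              finite S \<longrightarrow> finite T \<longrightarrow>
              L1 \<in> guarded_langs S T \<longrightarrow> L2 \<in> guarded_langs S T \<longrightarrow>
              kat_op 0 e (\<lambda>i. if i = 1 then L1 else L2) (\<lambda>_. BZero) T = L1 \<inter> L2)"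
  then obtain e where wf: "wf_kat {1, 2} {} e"
    and op: "\<And>L1 L2. L1 \<in> guarded_langs {0} {} \<Longrightarrow> L2 \<in> guarded_langs {0} {} \<Longrightarrow>
      apply_s (\<lambda>i. if i = 1 then L1 else L2) (klang {} e) = L1 \<inter> L2"
    by (metis finite.emptyI finite.insertI kat_op_no_tests)
  define U where "U = {[At {}, Act 0, At {}]}"
  define V where "V = {[At {}]}"
  have U: "U \<in> guarded_langs {0} {}" and V: "V \<in> guarded_langs {0} {}"
    by (simp_all add: U_def V_def singleton_guarded_lang)
  have "apply_s (\<lambda>_. U) (klang {} e) = U"
    using op[OF U U] by simp
  then have "\<exists>p. [At {}, Act p, At {}] \<in> klang {} e"
    using apply_s_const_single_action_inv[OF klang_guarded[OF wf], of 0] by (simp add: U_def)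
  then obtain p where p: "[At {}, Act p, At {}] \<in> klang {} e" ..
  obtain w where "w \<in> (if p = 1 then U else V)" "w \<noteq> []" "hd w = At {}" "last w = At {}"
    by (cases "p = 1") (auto simp: U_def V_def)
  then have "w \<in> apply_s (\<lambda>i. if i = 1 then U else V) (klang {} e)"
    by (intro apply_s_single_actionI[OF p]) auto
  moreover have "apply_s (\<lambda>i. if i = 1 then U else V) (klang {} e) = {}"
    using op[OF U V] by (simp add: U_def V_def)
  ultimately show False by blast
qed

end
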